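(* For every set $A \subseteq \mathbb{N}$, $$\underline{\underline{d}}(A) = d_*(A) \qquad\text{and}\qquad \overline{\overline{d}}(A) = d^*(A).$$
   Context: $\mathbb{N}=\{1,2,3,\dots\}$. For $A\subseteq\mathbb{N}$ let $A(n)=|A\cap[1,n]|$. Let $\mathcal{D}$ be the collection of all $A\subseteq\mathbb{N}$ for which the asymptotic density $d(A)=\lim_{n\to\infty}\frac{A(n)}{n}$ exists. Define $\underline{\underline{d}}(A)=\sup\{d(B);\ B\subseteq A,\ B\in\mathcal{D}\}$ and $\overline{\overline{d}}(A)=\inf\{d(C);\ C\supseteq A,\ C\in\mathcal{D}\}$. Define $d_*(A)=\sup \frac{\sum_{i=1}^{p}d(A_i)-\sum_{j=1}^{q}d(B_j)}{k}$, where the supremum is over all finite collections $A_1,\dots,A_p,B_1,\dots,B_q$ of sets in $\mathcal{D}$ and positive integers $k$ such that $k\chi_A+\sum_{j=1}^q\chi_{B_j}\ge\sum_{i=1}^p\chi_{A_i}$ pointwise on $\mathbb{N}$ ($\chi$ denotes the characteristic function). Define $d^*(A)=\inf \frac{\sum_{i=1}^{p}d(A_i)-\sum_{j=1}^{q}d(B_j)}{k}$, the infimum over all finite collections $A_1,\dots,A_p,B_1,\dots,B_q\in\mathcal{D}$ and positive integers $k$ such that $k\chi_A+\sum_{j=1}^q\chi_{B_j}\le\sum_{i=1}^p\chi_{A_i}$ pointwise. *)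

theory Defs
  imports Complex_Main
begin

text \<open>Subsets of the positive integers are modelled as sets of naturals contained in {1..}.\<close>

definition counting :: "nat set \<Rightarrow> nat \<Rightarrow> nat" where
  "counting A n = card (A \<inter> {1..n})"

definition has_density :: "nat set \<Rightarrow> real \<Rightarrow> bool" where
  "has_density A L \<longleftrightarrow> (\<lambda>n. real (counting A n) / real n) \<longlonglongrightarrow> L"

definition dens :: "nat set \<Rightarrow> real" where
  "dens A = lim (\<lambda>n. real (counting A n) / real n)"

definition Dcoll :: "nat set set" where
  "Dcoll = {A. A \<subseteq> {1..} \<and> (\<exists>L. has_density A L)}"

definition lower_dd :: "nat set \<Rightarrow> real" where
  "lower_dd A = Sup {dens B | B. B \<subseteq> A \<and> B \<in> Dcoll}"

definition upper_dd :: "nat set \<Rightarrow> real" where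
  "upper_dd A = Inf {dens C | C. A \<subseteq> C \<and> C \<in> Dcoll}"

definition chi :: "nat set \<Rightarrow> nat \<Rightarrow> real" where
  "chi A n = (if n \<in> A then 1 else 0)"

definition d_lower_star :: "nat set \<Rightarrow> real" where
  "d_lower_star A = Sup {(sum_list (map dens As) - sum_list (map dens Bs)) / real k | As Bs k.
      set As \<subseteq> Dcoll \<and> set Bs \<subseteq> Dcoll \<and> k > 0 \<and>
      (\<forall>n\<ge>1. real k * chi A n + sum_list (map (\<lambda>B. chi B n) Bs) \<ge> sum_list (map (\<lambda>C. chi C n) As))}"

definition d_upper_star :: "nat set \<Rightarrow> real" where
  "d_upper_star A = Inf {(sum_list (map dens As) - sum_list (map dens Bs)) / real k | As Bs k.
      set As \<subseteq> Dcoll \<and> set Bs \<subseteq> Dcoll \<and> k > 0 \<and>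
      (\<forall>n\<ge>1. real k * chi A n + sum_list (map (\<lambda>B. chi B n) Bs) \<le> sum_list (map (\<lambda>C. chi C n) As))}"

end

theory Submission
  imports Defs
begin

text \<open>
  Let \<open>f \<le> k \<chi>\<^sub>S\<close> have Cesaro means tending to \<open>m \<ge> 0\<close>. Then a subset \<open>B\<close> of \<open>S\<close> of
  density \<open>m / k\<close> is obtained greedily: put \<open>n \<in> S\<close> into \<open>B\<close> as soon as
  \<open>k (|B \<inter> [1, n)| + 1) \<le> f 1 + \<dots> + f n\<close>. Then \<open>k |B \<inter> [1, n]|\<close> lies between
  \<open>f 1 + \<dots> + f n - k\<close> and the running maximum of these partial sums, and both bounds
  grow like \<open>m n\<close>. Applied to \<open>f = \<Sum> \<chi>\<^sub>A\<^sub>i - \<Sum> \<chi>\<^sub>B\<^sub>j\<close>, every combination admissible for \<open>d\<^sub>*(A)\<close>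
  with nonnegative value becomes a subset of \<open>A\<close> of the same density; applied to the complement,
  every combination admissible for \<open>d\<^sup>*(A)\<close> with value at most 1 becomes a superset of \<open>A\<close>.
  Conversely a single set \<open>B \<subseteq> A\<close> (or \<open>C \<supseteq> A\<close>) is itself an admissible combination.
\<close>

lemma cSup_eq_cSup_of_cofinal:
  fixes X Y :: "'a::conditionally_complete_lattice set"
  assumes "X \<noteq> {}" "bdd_above X" "X \<subseteq> Y" "\<And>y. y \<in> Y \<Longrightarrow> \<exists>x\<in>X. y \<le> x"
  shows "Sup Y = Sup X"
proof (rule antisym)
  show "Sup Y \<le> Sup X"
    using assms by (intro cSup_mono) auto
  obtain M where M: "\<And>x. x \<in> X \<Longrightarrow> x \<le> M"
    using assms(2) by (auto simp: bdd_above_def)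
  have "bdd_above Y"
  proof (rule bdd_aboveI)
    fix y assume "y \<in> Y"
    then show "y \<le> M"
      using assms(4) M order_trans by blast
  qed
  then show "Sup X \<le> Sup Y"
    using assms(1,3) by (intro cSup_subset_mono)
qed

lemma cInf_eq_cInf_of_coinitial:
  fixes X Y :: "'a::conditionally_complete_lattice set"
  assumes "X \<noteq> {}" "bdd_below X" "X \<subseteq> Y" "\<And>y. y \<in> Y \<Longrightarrow> \<exists>x\<in>X. x \<le> y"
  shows "Inf Y = Inf X"
proof (rule antisym)
  show "Inf X \<le> Inf Y"
    using assms by (intro cInf_mono) auto
  obtain M where M: "\<And>x. x \<in> X \<Longrightarrow> M \<le> x"
    using assms(2) by (auto simp: bdd_below_def)
  have "bdd_below Y"
  proof (rule bdd_belowI)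
    fix y assume "y \<in> Y"
    then show "M \<le> y"
      using assms(4) M order_trans by blast
  qed
  then show "Inf Y \<le> Inf X"
    using assms(1,3) by (intro cInf_superset_mono)
qed

lemma counting_eq_sum_chi: "real (counting A n) = (\<Sum>i=1..n. chi A i)"
  by (simp add: counting_def chi_def sum.If_cases Int_commute)

lemma counting_le: "counting A n \<le> n"
  unfolding counting_def using card_mono[of "{1..n}" "A \<inter> {1..n}"] by auto

lemma has_density_dens: "A \<in> Dcoll \<Longrightarrow> has_density A (dens A)"
  unfolding Dcoll_def has_density_def dens_def using limI by fastforce

lemma dens_eqI: "has_density A L \<Longrightarrow> dens A = L"
  unfolding has_density_def dens_def by (rule limI)

lemma in_Dcoll_dens_eqI: "B \<subseteq> {1..} \<Longrightarrow> has_density B L \<Longrightarrow> B \<in> Dcoll \<and> dens B = L"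
  unfolding Dcoll_def using dens_eqI by blast

lemma has_density_bounds:
  assumes "has_density A L"
  shows "0 \<le> L" "L \<le> 1"
proof -
  have ratio_le_1: "real (counting A n) / real n \<le> 1" for n
    using counting_le[of A n] by (cases "n = 0") (auto simp: divide_le_eq)
  show "0 \<le> L"
    using assms unfolding has_density_def by (rule LIMSEQ_le_const) simp
  show "L \<le> 1"
    using assms unfolding has_density_def by (rule LIMSEQ_le_const2) (use ratio_le_1 in blast)
qed

lemma has_density_empty: "has_density {} 0"
  by (simp add: has_density_def counting_def)

lemma has_density_complement:
  assumes "has_density B L"
  shows "has_density ({1..} - B) (1 - L)"
proof -
  have "real (counting ({1..} - B) n) = (\<Sum>i=1..n. 1 - chi B i)" for n
    unfolding counting_eq_sum_chi by (intro sum.cong) (auto simp: chi_def)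
  then have complement_ratio:
    "real (counting ({1..} - B) n) / real n = 1 - real (counting B n) / real n" if "n > 0" for n
    using that by (simp add: sum_subtractf counting_eq_sum_chi field_simps)
  have "(\<lambda>n. 1 - real (counting B n) / real n) \<longlonglongrightarrow> 1 - L"
    using assms unfolding has_density_def by (intro tendsto_intros)
  moreover have "\<forall>\<^sub>F n in sequentially.
      1 - real (counting B n) / real n = real (counting ({1..} - B) n) / real n"
    using eventually_gt_at_top[of 0] by eventually_elim (metis complement_ratio)
  ultimately show ?thesis
    unfolding has_density_def by (rule Lim_transform_eventually)
qed

lemma has_density_positives: "has_density {1..} 1"
  using has_density_complement[OF has_density_empty] by simp

lemma tendsto_average_sum_chi_list:
  assumes "set As \<subseteq> Dcoll"
  shows "(\<lambda>n. (\<Sum>i=1..n. sum_list (map (\<lambda>C. chi C i) As)) / real n) \<longlonglongrightarrow> sum_list (map dens As)"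
  using assms
proof (induction As)
  case (Cons C As)
  have "(\<lambda>n. (\<Sum>i=1..n. chi C i) / real n) \<longlonglongrightarrow> dens C"
    using has_density_dens[of C] Cons.prems
    unfolding has_density_def counting_eq_sum_chi by simp
  with Cons show ?case
    by (simp add: sum.distrib add_divide_distrib tendsto_add)
qed simp

primrec running_max :: "(nat \<Rightarrow> real) \<Rightarrow> nat \<Rightarrow> real" where
  "running_max F 0 = F 0"
| "running_max F (Suc n) = max (running_max F n) (F (Suc n))"

lemma running_max_ge: "F n \<le> running_max F n"
  by (cases n) auto

lemma running_max_le_max_linear:
  assumes "a \<ge> 0" "\<And>n. n > N \<Longrightarrow> F n \<le> a * real n" "N \<le> n"
  shows "running_max F n \<le> max (running_max F N) (a * real n)"
  using assms(3)
proof (induction n rule: dec_induct)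
  case (step n)
  have "a * real n \<le> a * real (Suc n)"
    using assms(1) by (intro mult_left_mono) auto
  with step assms(2)[of "Suc n"] show ?case
    by auto
qed simp

lemma tendsto_running_max_average:
  assumes lim: "(\<lambda>n. F n / real n) \<longlonglongrightarrow> m" and "m \<ge> 0"
  shows "(\<lambda>n. running_max F n / real n) \<longlonglongrightarrow> m"
proof (rule order_tendstoI)
  fix a assume "a < m"
  have "\<forall>\<^sub>F n in sequentially. a < F n / real n"
    using lim \<open>a < m\<close> by (rule order_tendstoD)
  then show "\<forall>\<^sub>F n in sequentially. a < running_max F n / real n"
    by eventually_elim (smt (verit) divide_right_mono of_nat_0_le_iff running_max_ge)
next
  fix a assume "m < a"
  then obtain b where "m < b" "b < a"
    using dense by blast
  have "\<forall>\<^sub>F n in sequentially. F n / real n < b"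
    using lim \<open>m < b\<close> by (rule order_tendstoD)
  then obtain N where N: "\<And>n. n \<ge> N \<Longrightarrow> F n / real n < b"
    unfolding eventually_sequentially by blast
  have F_below: "F n \<le> b * real n" if "n > N" for n
    using N[of n] that by (simp add: divide_less_eq)
  have "(\<lambda>n. running_max F N / real n) \<longlonglongrightarrow> 0"
    by (intro tendsto_divide_0[OF tendsto_const] filterlim_at_top_imp_at_infinity
        filterlim_real_sequentially)
  then have "\<forall>\<^sub>F n in sequentially. running_max F N / real n < a"
    by (rule order_tendstoD(2)) (use \<open>m < b\<close> \<open>b < a\<close> \<open>m \<ge> 0\<close> in linarith)
  with eventually_gt_at_top[of N]
  show "\<forall>\<^sub>F n in sequentially. running_max F n / real n < a"
  proof eventually_elim
    case (elim n)
    then have "running_max F n \<le> max (running_max F N) (b * real n)"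
      using \<open>m < b\<close> \<open>m \<ge> 0\<close> F_below by (intro running_max_le_max_linear) auto
    then have "running_max F n / real n \<le> max (running_max F N / real n) b"
      using elim by (auto simp: divide_le_eq max_def)
    then show ?case
      using elim \<open>b < a\<close> by linarith
  qed
qed

subsection \<open>Greedy extraction of a subset with prescribed density\<close>

primrec greedy_count :: "nat set \<Rightarrow> (nat \<Rightarrow> real) \<Rightarrow> real \<Rightarrow> nat \<Rightarrow> nat" where
  "greedy_count S f c 0 = 0"
| "greedy_count S f c (Suc n) =
    (if Suc n \<in> S \<and> c * (real (greedy_count S f c n) + 1) \<le> (\<Sum>i=1..Suc n. f i)
     then Suc (greedy_count S f c n) else greedy_count S f c n)"

definition greedy_set :: "nat set \<Rightarrow> (nat \<Rightarrow> real) \<Rightarrow> real \<Rightarrow> nat set" where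
  "greedy_set S f c =
    {n \<in> S. n \<ge> 1 \<and> c * (real (greedy_count S f c (n - 1)) + 1) \<le> (\<Sum>i=1..n. f i)}"

lemma greedy_set_subset: "greedy_set S f c \<subseteq> S \<inter> {1..}"
  by (auto simp: greedy_set_def)

lemma counting_greedy_set: "counting (greedy_set S f c) n = greedy_count S f c n"
proof -
  have "real (counting (greedy_set S f c) n) = real (greedy_count S f c n)"
    by (induction n) (simp_all add: counting_eq_sum_chi chi_def greedy_set_def)
  then show ?thesis
    by simp
qed

lemma greedy_count_lower_bound:
  assumes "c \<ge> 0" and f_le: "\<And>n. n \<ge> 1 \<Longrightarrow> f n \<le> c * chi S n"
  shows "(\<Sum>i=1..n. f i) - c * real (greedy_count S f c n) \<le> c"
proof (induction n)
  case 0
  then show ?case using assms(1) by simp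
next
  case (Suc n)
  have "f (Suc n) \<le> c" "Suc n \<notin> S \<Longrightarrow> f (Suc n) \<le> 0"
    using f_le[of "Suc n"] assms(1) by (auto simp: chi_def split: if_splits)
  with Suc show ?case
    by (auto simp: algebra_simps)
qed

lemma greedy_count_upper_bound:
  "c * real (greedy_count S f c n) \<le> running_max (\<lambda>n. \<Sum>i=1..n. f i) n"
  by (induction n) (auto simp: algebra_simps le_max_iff_disj)

lemma exists_subset_has_density:
  assumes "c > 0" and f_le: "\<And>n. n \<ge> 1 \<Longrightarrow> f n \<le> c * chi S n"
    and lim: "(\<lambda>n. (\<Sum>i=1..n. f i) / real n) \<longlonglongrightarrow> m" and "m \<ge> 0"
  shows "\<exists>B \<subseteq> S \<inter> {1..}. has_density B (m / c)"
proof (intro exI conjI)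
  define F where "F = (\<lambda>n. \<Sum>i=1..n. f i)"
  define g where "g = greedy_count S f c"
  have lower: "(F n / real n - c / real n) / c \<le> real (g n) / real n" if "n \<ge> 1" for n
  proof -
    have "(F n / real n - c / real n) / c = (F n - c) / (c * real n)"
      using that \<open>c > 0\<close> by (simp add: field_simps)
    also have "\<dots> \<le> (c * real (g n)) / (c * real n)"
      using greedy_count_lower_bound[OF _ f_le, of n] that \<open>c > 0\<close>
      by (intro divide_right_mono) (auto simp: F_def g_def)
    finally show ?thesis
      using \<open>c > 0\<close> by simp
  qed
  have upper: "real (g n) / real n \<le> running_max F n / real n / c" if "n \<ge> 1" for n
    using greedy_count_upper_bound[of c S f n] that \<open>c > 0\<close>
    by (simp add: F_def g_def field_simps)
  have "(\<lambda>n. (F n / real n - c / real n) / c) \<longlonglongrightarrow> (m - 0) / c"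
    using lim \<open>c > 0\<close> unfolding F_def
    by (intro tendsto_intros tendsto_divide_0[OF tendsto_const]
        filterlim_at_top_imp_at_infinity filterlim_real_sequentially) auto
  then have "(\<lambda>n. (F n / real n - c / real n) / c) \<longlonglongrightarrow> m / c"
    by simp
  moreover have "(\<lambda>n. running_max F n / real n / c) \<longlonglongrightarrow> m / c"
    using lim \<open>m \<ge> 0\<close> \<open>c > 0\<close> unfolding F_def
    by (intro tendsto_intros tendsto_running_max_average) auto
  ultimately have "(\<lambda>n. real (g n) / real n) \<longlonglongrightarrow> m / c"
  proof (rule tendsto_sandwich[rotated 2])
    show "\<forall>\<^sub>F n in sequentially. (F n / real n - c / real n) / c \<le> real (g n) / real n"
      using eventually_ge_at_top[of 1] by eventually_elim (rule lower)
    show "\<forall>\<^sub>F n in sequentially. real (g n) / real n \<le> running_max F n / real n / c"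
      using eventually_ge_at_top[of 1] by eventually_elim (rule upper)
  qed
  then show "has_density (greedy_set S f c) (m / c)"
    unfolding has_density_def counting_greedy_set g_def .
qed (rule greedy_set_subset)

subsection \<open>Admissible combinations\<close>

definition d_lower_star_values :: "nat set \<Rightarrow> real set" where
  "d_lower_star_values A = {(sum_list (map dens As) - sum_list (map dens Bs)) / real k | As Bs k.
      set As \<subseteq> Dcoll \<and> set Bs \<subseteq> Dcoll \<and> k > 0 \<and>
      (\<forall>n\<ge>1. real k * chi A n + sum_list (map (\<lambda>B. chi B n) Bs) \<ge> sum_list (map (\<lambda>C. chi C n) As))}"

definition d_upper_star_values :: "nat set \<Rightarrow> real set" where
  "d_upper_star_values A = {(sum_list (map dens As) - sum_list (map dens Bs)) / real k | As Bs k.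
      set As \<subseteq> Dcoll \<and> set Bs \<subseteq> Dcoll \<and> k > 0 \<and>
      (\<forall>n\<ge>1. real k * chi A n + sum_list (map (\<lambda>B. chi B n) Bs) \<le> sum_list (map (\<lambda>C. chi C n) As))}"

lemma dens_mem_d_lower_star_values: "B \<subseteq> A \<Longrightarrow> B \<in> Dcoll \<Longrightarrow> dens B \<in> d_lower_star_values A"
  unfolding d_lower_star_values_def
  by (intro CollectI exI[of _ "[B]"] exI[of _ "[]"] exI[of _ "1::nat"]) (auto simp: chi_def)

lemma dens_mem_d_upper_star_values: "A \<subseteq> C \<Longrightarrow> C \<in> Dcoll \<Longrightarrow> dens C \<in> d_upper_star_values A"
  unfolding d_upper_star_values_def
  by (intro CollectI exI[of _ "[C]"] exI[of _ "[]"] exI[of _ "1::nat"]) (auto simp: chi_def)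

lemma tendsto_average_chi_combination:
  assumes "set As \<subseteq> Dcoll" "set Bs \<subseteq> Dcoll"
  shows "(\<lambda>n. (\<Sum>i=1..n. sum_list (map (\<lambda>C. chi C i) As) - sum_list (map (\<lambda>C. chi C i) Bs)) / real n)
     \<longlonglongrightarrow> sum_list (map dens As) - sum_list (map dens Bs)"
  using tendsto_diff[OF assms[THEN tendsto_average_sum_chi_list]]
  by (simp add: sum_subtractf diff_divide_distrib)

lemma d_lower_star_value_realized:
  assumes "y \<in> d_lower_star_values A" "y \<ge> 0"
  shows "\<exists>B \<subseteq> A. B \<in> Dcoll \<and> dens B = y"
proof -
  obtain As Bs k where y: "y = (sum_list (map dens As) - sum_list (map dens Bs)) / real k"
    and As: "set As \<subseteq> Dcoll" and Bs: "set Bs \<subseteq> Dcoll" and "k > 0"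
    and below: "\<forall>n\<ge>1. real k * chi A n + sum_list (map (\<lambda>B. chi B n) Bs)
                        \<ge> sum_list (map (\<lambda>C. chi C n) As)"
    using assms(1) unfolding d_lower_star_values_def by blast
  have "\<exists>B \<subseteq> A \<inter> {1..}. has_density B y"
    unfolding y
  proof (rule exists_subset_has_density[OF _ _ tendsto_average_chi_combination[OF As Bs]])
    show "real k > 0"
      using \<open>k > 0\<close> by simp
    show "sum_list (map (\<lambda>C. chi C n) As) - sum_list (map (\<lambda>C. chi C n) Bs) \<le> real k * chi A n"
      if "n \<ge> 1" for n
      using below that by fastforce
    show "sum_list (map dens As) - sum_list (map dens Bs) \<ge> 0"
      using assms(2) \<open>k > 0\<close> unfolding y by (simp add: zero_le_divide_iff)
  qed
  then obtain B where "B \<subseteq> A" "B \<subseteq> {1..}" "has_density B y"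
    by blast
  then show ?thesis
    using in_Dcoll_dens_eqI by blast
qed

lemma d_upper_star_value_realized:
  assumes "A \<subseteq> {1..}" "y \<in> d_upper_star_values A" "y \<le> 1"
  shows "\<exists>C. A \<subseteq> C \<and> C \<in> Dcoll \<and> dens C = y"
proof -
  obtain As Bs k where y: "y = (sum_list (map dens As) - sum_list (map dens Bs)) / real k"
    and As: "set As \<subseteq> Dcoll" and Bs: "set Bs \<subseteq> Dcoll" and "k > 0"
    and above: "\<forall>n\<ge>1. real k * chi A n + sum_list (map (\<lambda>B. chi B n) Bs)
                        \<le> sum_list (map (\<lambda>C. chi C n) As)"
    using assms(2) unfolding d_upper_star_values_def by blast
  define h where "h n = sum_list (map (\<lambda>C. chi C n) As) - sum_list (map (\<lambda>C. chi C n) Bs)" for n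
  have "(\<lambda>n. real k - (\<Sum>i=1..n. h i) / real n) \<longlonglongrightarrow> real k - y * real k"
    using tendsto_average_chi_combination[OF As Bs] \<open>k > 0\<close> unfolding h_def y
    by (intro tendsto_intros) simp
  moreover have "\<forall>\<^sub>F n in sequentially. real k - (\<Sum>i=1..n. h i) / real n
      = (\<Sum>i=1..n. real k - h i) / real n"
    using eventually_ge_at_top[of 1] by eventually_elim (simp add: sum_subtractf field_simps)
  ultimately have lim: "(\<lambda>n. (\<Sum>i=1..n. real k - h i) / real n) \<longlonglongrightarrow> real k - y * real k"
    by (rule Lim_transform_eventually)
  have le: "real k - h n \<le> real k * chi ({1..} - A) n" if "n \<ge> 1" for n
    using above that by (auto simp: h_def chi_def)
  have "real k - y * real k \<ge> 0"
    using mult_right_mono[OF assms(3), of "real k"] by simp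
  then obtain B where B: "B \<subseteq> ({1..} - A) \<inter> {1..}"
    and B_density: "has_density B ((real k - y * real k) / real k)"
    using exists_subset_has_density[OF _ le lim] \<open>k > 0\<close> by auto
  have "1 - (real k - y * real k) / real k = y"
    using \<open>k > 0\<close> by (simp add: field_simps)
  then have "has_density ({1..} - B) y"
    using has_density_complement[OF B_density] by simp
  moreover have "A \<subseteq> {1..} - B"
    using B assms(1) by blast
  ultimately show ?thesis
    using in_Dcoll_dens_eqI[of "{1..} - B"] by blast
qed

lemma lower_dd_eq_d_lower_star: "lower_dd A = d_lower_star A"
proof -
  let ?L = "{dens B | B. B \<subseteq> A \<and> B \<in> Dcoll}"
  have "d_lower_star A = Sup (d_lower_star_values A)"
    by (simp add: d_lower_star_def d_lower_star_values_def)
  also have "\<dots> = Sup ?L"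
  proof (rule cSup_eq_cSup_of_cofinal)
    show "?L \<noteq> {}"
      using has_density_empty by (auto simp: Dcoll_def)
    show "bdd_above ?L"
      by (intro bdd_aboveI[of _ 1]) (auto dest: has_density_dens has_density_bounds)
    show "?L \<subseteq> d_lower_star_values A"
      using dens_mem_d_lower_star_values by blast
    show "\<exists>x\<in>?L. y \<le> x" if y: "y \<in> d_lower_star_values A" for y
    proof (cases "y < 0")
      case True
      have "{} \<in> Dcoll" "dens {} = 0"
        using in_Dcoll_dens_eqI[OF _ has_density_empty] by auto
      with True show ?thesis
        by (intro bexI[of _ 0] CollectI exI[of _ "{}"]) auto
    next
      case False
      then obtain B where "B \<subseteq> A" "B \<in> Dcoll" "dens B = y"
        using d_lower_star_value_realized[OF y] by auto
      then show ?thesis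
        by blast
    qed
  qed
  finally show ?thesis
    by (simp add: lower_dd_def)
qed

lemma upper_dd_eq_d_upper_star:
  assumes "A \<subseteq> {1..}"
  shows "upper_dd A = d_upper_star A"
proof -
  let ?U = "{dens C | C. A \<subseteq> C \<and> C \<in> Dcoll}"
  have "d_upper_star A = Inf (d_upper_star_values A)"
    by (simp add: d_upper_star_def d_upper_star_values_def)
  also have "\<dots> = Inf ?U"
  proof (rule cInf_eq_cInf_of_coinitial)
    show "?U \<noteq> {}"
      using has_density_positives assms by (auto simp: Dcoll_def)
    show "bdd_below ?U"
      by (intro bdd_belowI[of _ 0]) (auto dest: has_density_dens has_density_bounds)
    show "?U \<subseteq> d_upper_star_values A"
      using dens_mem_d_upper_star_values by blast
    show "\<exists>x\<in>?U. x \<le> y" if y: "y \<in> d_upper_star_values A" for y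
    proof (cases "y > 1")
      case True
      have "{1..} \<in> Dcoll" "dens {1..} = 1"
        using in_Dcoll_dens_eqI[OF _ has_density_positives] by auto
      with True assms show ?thesis
        by (intro bexI[of _ 1] CollectI exI[of _ "{1..}"]) auto
    next
      case False
      then obtain C where "A \<subseteq> C" "C \<in> Dcoll" "dens C = y"
        using d_upper_star_value_realized[OF assms y] by auto
      then show ?thesis
        by blast
    qed
  qed
  finally show ?thesis
    by (simp add: upper_dd_def)
qed

theorem theorem3p2:
  fixes A :: "nat set"
  assumes "A \<subseteq> {1..}"
  shows "lower_dd A = d_lower_star A \<and> upper_dd A = d_upper_star A"
  using lower_dd_eq_d_lower_star upper_dd_eq_d_upper_star[OF assms] by blast

end
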